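(* Let $\Gamma$ be a finite simple graph and $A_\Gamma$ the right-angled Artin group on $\Gamma$, with standard generating set $S=V(\Gamma)^{\pm1}$. Then for $g\in A_\Gamma\smallsetminus\{e\}$, $\kappa(g)=0$ if and only if $g$ is central in $A_\Gamma$; otherwise $\kappa(g)<0$.
   Context: The right-angled Artin group $A_\Gamma$ has generators the vertices of $\Gamma$ and relations $[u,v]=e$ for each edge $\{u,v\}$ of $\Gamma$. For a group with finite generating set $S$ ($S=S^{-1}$, $e\notin S$), $|x|$ is word length, $\mathrm{Av}(g)=\frac{1}{|S|}\sum_{a\in S}|a^{-1}ga|$, and for $g\neq e$ the curvature is $\kappa(g)=\frac{|g|-\mathrm{Av}(g)}{|g|}$. *)

theory Defs
  imports Complex_Main
begin

text \<open>Elements are represented by words over the letters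
 (v, b), where (v, True) stands for the generator v and (v, False) for its inverse.\<close>

type_synonym 'v letter = "'v \<times> bool"

definition letter_inv :: "'v letter \<Rightarrow> 'v letter" where
  "letter_inv a = (fst a, \<not> snd a)"

inductive raag_step :: "('v \<Rightarrow> 'v \<Rightarrow> bool) \<Rightarrow> 'v letter list \<Rightarrow> 'v letter list \<Rightarrow> bool"
  for E where
  cancel: "raag_step E (u @ [(x, b), (x, \<not> b)] @ w) (u @ w)"
| comm: "E x y \<Longrightarrow> raag_step E (u @ [(x, b), (y, c)] @ w) (u @ [(y, c), (x, b)] @ w)"

definition raag_eq :: "('v \<Rightarrow> 'v \<Rightarrow> bool) \<Rightarrow> 'v letter list \<Rightarrow> 'v letter list \<Rightarrow> bool" where
  "raag_eq E = (\<lambda>p q. raag_step E p q \<or> raag_step E q p)\<^sup>*\<^sup>*"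

definition raag_len :: "'v set \<Rightarrow> ('v \<Rightarrow> 'v \<Rightarrow> bool) \<Rightarrow> 'v letter list \<Rightarrow> nat" where
  "raag_len V E w = (LEAST n. \<exists>w'. w' \<in> lists (V \<times> UNIV) \<and> raag_eq E w w' \<and> length w' = n)"

definition gens :: "'v set \<Rightarrow> 'v letter set" where
  "gens V = V \<times> (UNIV :: bool set)"

definition raag_Av :: "'v set \<Rightarrow> ('v \<Rightarrow> 'v \<Rightarrow> bool) \<Rightarrow> 'v letter list \<Rightarrow> real" where
  "raag_Av V E w = (\<Sum>a\<in>gens V. real (raag_len V E ([letter_inv a] @ w @ [a]))) / real (card (gens V))"

definition raag_curv :: "'v set \<Rightarrow> ('v \<Rightarrow> 'v \<Rightarrow> bool) \<Rightarrow> 'v letter list \<Rightarrow> real" where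
  "raag_curv V E w = (real (raag_len V E w) - raag_Av V E w) / real (raag_len V E w)"

definition raag_central :: "'v set \<Rightarrow> ('v \<Rightarrow> 'v \<Rightarrow> bool) \<Rightarrow> 'v letter list \<Rightarrow> bool" where
  "raag_central V E w = (\<forall>u \<in> lists (gens V). raag_eq E (w @ u) (u @ w))"

end

theory Submission
  imports Defs
begin

text \<open>
  Multiplying a word in letter by letter, each new letter travelling right past the letters
  it commutes with and cancelling against its inverse if it meets it there, produces a reduced
  word. Reduced words representing the same element differ only by swaps of commuting letters,
  so the length of any of them is the word length.

  Let w be a reduced word for g and a a generator on the vertex x. Then a\<inverse> w a is reduced
  unless a\<inverse> cancels into the front of w, a cancels into its back, or every letter of w
  commutes with x. Hence |a\<inverse> g a| is |g| + 2 in the generic case, at least |g| if one of the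
  two cancellations is impossible, and at least |g| - 2 always. Since the front of w can absorb
  at most one of x and x\<inverse>, a case check gives |x\<inverse> g x| + |x g x\<inverse>| \<ge> 2|g|, strictly when
  the first letter of w not commuting with x lies on another vertex. So Av(g) \<ge> |g|, with
  equality for central g. If g is not central, some letter of w on a vertex y is not adjacent
  to some vertex x \<noteq> y, and then the first non-commuting letter of w for x or for y lies on
  another vertex; hence Av(g) > |g|.
\<close>


lemma letter_inv_Pair [simp]: "letter_inv (x, b) = (x, \<not> b)"
  by (simp add: letter_inv_def)

lemma letter_inv_inv [simp]: "letter_inv (letter_inv a) = a"
  by (cases a) simp

lemma fst_letter_inv [simp]: "fst (letter_inv a) = fst a"
  by (simp add: letter_inv_def)

lemma letter_inv_neq [simp]: "letter_inv a \<noteq> a" "a \<noteq> letter_inv a"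
  by (cases a, simp)+

lemma letter_inv_inject [simp]: "letter_inv a = letter_inv c \<longleftrightarrow> a = c"
  by (metis letter_inv_inv)

lemma fst_eq_iff_letter_or_inv: "fst e = fst a \<longleftrightarrow> e = a \<or> e = letter_inv a"
  by (cases e; cases a) auto

lemma letter_inv_in_gens: "a \<in> gens V \<Longrightarrow> letter_inv a \<in> gens V"
  by (cases a) (simp add: gens_def)

lemma raag_eq_equivclp: "raag_eq E = equivclp (raag_step E)"
  by (simp add: raag_eq_def equivclp_def symclp_def[abs_def])

lemma raag_eq_refl [simp]: "raag_eq E w w"
  by (simp add: raag_eq_equivclp)

lemma raag_eq_sym [sym]: "raag_eq E w w' \<Longrightarrow> raag_eq E w' w"
  by (simp add: raag_eq_equivclp equivclp_sym)

lemma raag_eq_trans [trans]: "raag_eq E u v \<Longrightarrow> raag_eq E v w \<Longrightarrow> raag_eq E u w"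
  unfolding raag_eq_equivclp by (rule equivclp_trans)

lemma raag_step_append: "raag_step E w w' \<Longrightarrow> raag_step E (p @ w @ s) (p @ w' @ s)"
proof (induction rule: raag_step.induct)
  case (cancel u x b w)
  then show ?case using raag_step.cancel[of E "p @ u" x b "w @ s"] by simp
next
  case (comm x y u b c w)
  then show ?case using raag_step.comm[of E x y "p @ u" b c "w @ s"] by simp
qed

lemma raag_eq_append_both: "raag_eq E w w' \<Longrightarrow> raag_eq E (p @ w @ s) (p @ w' @ s)"
  unfolding raag_eq_equivclp
proof (induction rule: equivclp_induct)
  case (step y z)
  then show ?case by (blast intro: equivclp_into_equivclp raag_step_append)
qed simp

lemma raag_eq_append: "raag_eq E u u' \<Longrightarrow> raag_eq E w w' \<Longrightarrow> raag_eq E (u @ w) (u' @ w')"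
  using raag_eq_append_both[of E u u' "[]" w] raag_eq_append_both[of E w w' u' "[]"]
  by (auto intro: raag_eq_trans)

lemma raag_eq_Cons: "raag_eq E w w' \<Longrightarrow> raag_eq E (c # w) (c # w')"
  using raag_eq_append[of E "[c]" "[c]" w w'] by simp

lemma raag_eq_cancel: "raag_eq E (u @ [a, letter_inv a] @ w) (u @ w)"
  using raag_step.cancel[of E u "fst a" "snd a" w]
  by (cases a) (auto simp: raag_eq_equivclp)

lemma raag_eq_cancel_Cons: "raag_eq E (a # letter_inv a # w) w"
  using raag_eq_cancel[of E "[]" a w] by simp

lemma raag_eq_cancel_snoc: "raag_eq E (w @ [a, letter_inv a]) w"
  using raag_eq_cancel[of E w a "[]"] by simp

lemma raag_eq_swap: "E (fst c) (fst d) \<Longrightarrow> raag_eq E (c # d # w) (d # c # w)"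
  using raag_step.comm[of E "fst c" "fst d" "[]" "snd c" "snd d" w]
  by (cases c, cases d) (auto simp: raag_eq_equivclp)

subsection \<open>Reduced words\<close>

inductive commute_step :: "('v \<Rightarrow> 'v \<Rightarrow> bool) \<Rightarrow> 'v letter list \<Rightarrow> 'v letter list \<Rightarrow> bool"
  for E where
  "E (fst c) (fst d) \<Longrightarrow> commute_step E (p @ c # d # q) (p @ d # c # q)"

abbreviation commute_equiv :: "('v \<Rightarrow> 'v \<Rightarrow> bool) \<Rightarrow> 'v letter list \<Rightarrow> 'v letter list \<Rightarrow> bool" where
  "commute_equiv E \<equiv> equivclp (commute_step E)"

lemma commute_step_length: "commute_step E w w' \<Longrightarrow> length w' = length w"
  by (induction rule: commute_step.induct) simp

lemma commute_equiv_length: "commute_equiv E w w' \<Longrightarrow> length w' = length w"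
  by (induction rule: equivclp_induct) (auto dest: commute_step_length)

lemma commute_equiv_swap: "E (fst c) (fst d) \<Longrightarrow> commute_equiv E (c # d # q) (d # c # q)"
  using commute_step.intros[of E c d "[]" q] by auto

lemma commute_step_Cons: "commute_step E w w' \<Longrightarrow> commute_step E (c # w) (c # w')"
  by (induction rule: commute_step.induct) (use commute_step.intros[of E _ _ "c # _"] in simp)

lemma commute_equiv_Cons: "commute_equiv E w w' \<Longrightarrow> commute_equiv E (c # w) (c # w')"
  by (induction rule: equivclp_induct) (auto intro: equivclp_into_equivclp commute_step_Cons)

text \<open>Since E is irreflexive, first_noncomm E x w also stops at letters on x itself.\<close>

fun first_noncomm :: "('v \<Rightarrow> 'v \<Rightarrow> bool) \<Rightarrow> 'v \<Rightarrow> 'v letter list \<Rightarrow> 'v letter option" where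
  "first_noncomm E x [] = None"
| "first_noncomm E x (c # w) = (if E x (fst c) then first_noncomm E x w else Some c)"

fun mult_letter :: "('v \<Rightarrow> 'v \<Rightarrow> bool) \<Rightarrow> 'v letter \<Rightarrow> 'v letter list \<Rightarrow> 'v letter list" where
  "mult_letter E a [] = [a]"
| "mult_letter E a (c # w) =
    (if c = letter_inv a then w
     else if E (fst a) (fst c) then c # mult_letter E a w
     else a # c # w)"

definition reduce :: "('v \<Rightarrow> 'v \<Rightarrow> bool) \<Rightarrow> 'v letter list \<Rightarrow> 'v letter list" where
  "reduce E w = foldr (mult_letter E) w []"

fun reduced :: "('v \<Rightarrow> 'v \<Rightarrow> bool) \<Rightarrow> 'v letter list \<Rightarrow> bool" where
  "reduced E [] = True"
| "reduced E (c # w) = (reduced E w \<and> first_noncomm E (fst c) w \<noteq> Some (letter_inv c))"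

lemma reduce_Nil [simp]: "reduce E [] = []"
  by (simp add: reduce_def)

lemma reduce_Cons [simp]: "reduce E (a # w) = mult_letter E a (reduce E w)"
  by (simp add: reduce_def)

lemma reduce_append: "reduce E (u @ w) = foldr (mult_letter E) u (reduce E w)"
  by (simp add: reduce_def)

lemma first_noncomm_eq_None: "first_noncomm E x w = None \<longleftrightarrow> (\<forall>e\<in>set w. E x (fst e))"
  by (induction w) auto

lemma first_noncomm_rev_eq_None: "first_noncomm E x (rev w) = None \<longleftrightarrow> first_noncomm E x w = None"
  by (simp add: first_noncomm_eq_None)

lemma first_noncomm_neq_None: "e \<in> set w \<Longrightarrow> \<not> E x (fst e) \<Longrightarrow> first_noncomm E x w \<noteq> None"
  by (auto simp: first_noncomm_eq_None)

lemma first_noncomm_append: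
  "first_noncomm E x (w @ s) = (case first_noncomm E x w of None \<Rightarrow> first_noncomm E x s | Some c \<Rightarrow> Some c)"
  by (induction w) auto

lemma reduced_snoc:
  assumes "reduced E w" and "first_noncomm E (fst d) (rev w) \<noteq> Some (letter_inv d)"
  shows "reduced E (w @ [d])"
  using assms
proof (induction w)
  case (Cons c w)
  have "first_noncomm E (fst d) (rev w) \<noteq> Some (letter_inv d)"
    using Cons.prems(2) by (auto simp: first_noncomm_append split: option.splits)
  then have "reduced E (w @ [d])" using Cons by simp
  moreover have "first_noncomm E (fst c) (w @ [d]) \<noteq> Some (letter_inv c)"
  proof (cases "first_noncomm E (fst c) w")
    case None
    then have "first_noncomm E (fst c) (rev w) = None"
      by (simp add: first_noncomm_eq_None)
    then show ?thesis using None Cons.prems(2)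
      by (auto simp: first_noncomm_append)
  qed (use Cons.prems(1) in \<open>simp add: first_noncomm_append\<close>)
  ultimately show ?case using Cons.prems(1) by simp
qed simp

lemma raag_eq_mult_letter: "raag_eq E (mult_letter E a w) (a # w)"
proof (induction w)
  case (Cons c w)
  consider "c = letter_inv a" | "c \<noteq> letter_inv a" "E (fst a) (fst c)"
    | "c \<noteq> letter_inv a" "\<not> E (fst a) (fst c)"
    by blast
  then show ?case
  proof cases
    case 1
    then show ?thesis using raag_eq_cancel_Cons[of E a w] by (simp add: raag_eq_sym)
  next
    case 2
    have "raag_eq E (c # mult_letter E a w) (c # a # w)" using Cons.IH by (rule raag_eq_Cons)
    also have "raag_eq E \<dots> (a # c # w)" using raag_eq_swap[of E a c w] 2 by (blast intro: raag_eq_sym)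
    finally show ?thesis using 2 by simp
  next
    case 3
    then show ?thesis by simp
  qed
qed simp

lemma raag_eq_reduce: "raag_eq E (reduce E w) w"
proof (induction w)
  case (Cons a w)
  have "raag_eq E (mult_letter E a (reduce E w)) (a # reduce E w)" by (rule raag_eq_mult_letter)
  also have "raag_eq E \<dots> (a # w)" using Cons.IH by (rule raag_eq_Cons)
  finally show ?case by simp
qed simp

lemma set_mult_letter: "set (mult_letter E a w) \<subseteq> insert a (set w)"
  by (induction w) auto

lemma set_reduce: "set (reduce E w) \<subseteq> set w"
  by (induction w) (use set_mult_letter in force)+

lemma reduce_in_lists: "w \<in> lists A \<Longrightarrow> reduce E w \<in> lists A"
  using set_reduce by blast

lemma length_mult_letter: "length (mult_letter E a w) \<le> Suc (length w)"
  by (induction w) auto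

lemma length_reduce: "length (reduce E w) \<le> length w"
proof (induction w)
  case (Cons a w)
  then show ?case using length_mult_letter[of E a "reduce E w"] by simp
qed simp

locale raag_graph =
  fixes E :: "'v \<Rightarrow> 'v \<Rightarrow> bool"
  assumes adj_sym: "E x y \<Longrightarrow> E y x"
    and adj_irrefl: "\<not> E x x"
begin

lemma adj_imp_neq_inv: "E (fst a) (fst c) \<Longrightarrow> c \<noteq> letter_inv a \<and> c \<noteq> a"
  using adj_irrefl by (metis fst_letter_inv)

lemma mult_letter_swap:
  assumes cd: "E (fst c) (fst d)"
  shows "commute_equiv E (mult_letter E a (c # d # q)) (mult_letter E a (d # c # q))"
proof -
  have "fst c \<noteq> fst d" using cd adj_irrefl by metis
  then consider "c = letter_inv a" | "d = letter_inv a"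
    | "c \<noteq> letter_inv a" "d \<noteq> letter_inv a" "E (fst a) (fst c)" "E (fst a) (fst d)"
    | "c \<noteq> letter_inv a" "d \<noteq> letter_inv a" "E (fst a) (fst c)" "\<not> E (fst a) (fst d)"
    | "c \<noteq> letter_inv a" "d \<noteq> letter_inv a" "\<not> E (fst a) (fst c)" "E (fst a) (fst d)"
    | "c \<noteq> letter_inv a" "d \<noteq> letter_inv a" "\<not> E (fst a) (fst c)" "\<not> E (fst a) (fst d)"
    by (metis fst_letter_inv)
  then show ?thesis
  proof cases
    case 1
    then show ?thesis using cd \<open>fst c \<noteq> fst d\<close> by auto
  next
    case 2
    then show ?thesis using cd adj_sym \<open>fst c \<noteq> fst d\<close> by auto
  next
    case 3
    then show ?thesis using cd by (simp add: commute_equiv_swap)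
  next
    case 4
    have "commute_equiv E (c # a # d # q) (a # c # d # q)"
      using 4 adj_sym by (simp add: commute_equiv_swap)
    also have "commute_equiv E \<dots> (a # d # c # q)"
      using cd by (simp add: commute_equiv_swap commute_equiv_Cons)
    finally show ?thesis using 4 by simp
  next
    case 5
    have "commute_equiv E (a # c # d # q) (a # d # c # q)"
      using cd by (simp add: commute_equiv_swap commute_equiv_Cons)
    also have "commute_equiv E \<dots> (d # a # c # q)"
      using 5 by (simp add: commute_equiv_swap)
    finally show ?thesis using 5 by simp
  next
    case 6
    then show ?thesis using cd by (simp add: commute_equiv_swap commute_equiv_Cons)
  qed
qed

lemma mult_letter_commute_step:
  "commute_step E w w' \<Longrightarrow> commute_equiv E (mult_letter E a w) (mult_letter E a w')"
proof (induction rule: commute_step.induct)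
  case (1 c d p q)
  then show ?case
  proof (induction p)
    case (Cons e p)
    then show ?case
      using commute_step.intros[of E c d p q] commute_step.intros[of E c d "e # p" q]
      by (auto intro: commute_equiv_Cons)
  qed (simp del: mult_letter.simps add: mult_letter_swap)
qed

lemma mult_letter_commute_equiv:
  "commute_equiv E w w' \<Longrightarrow> commute_equiv E (mult_letter E a w) (mult_letter E a w')"
  by (induction rule: equivclp_induct)
    (auto intro: equivclp_trans equivclp_sym dest: mult_letter_commute_step)

lemma foldr_mult_letter_commute_equiv:
  "commute_equiv E w w' \<Longrightarrow> commute_equiv E (foldr (mult_letter E) u w) (foldr (mult_letter E) u w')"
  by (induction u) (auto intro: mult_letter_commute_equiv)

lemma mult_letter_comm:
  assumes ad: "E (fst a) (fst d)"
  shows "commute_equiv E (mult_letter E a (mult_letter E d r)) (mult_letter E d (mult_letter E a r))"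
proof (induction r)
  case Nil
  then show ?case using ad adj_sym adj_imp_neq_inv[OF ad] by (auto intro: commute_equiv_swap)
next
  case (Cons c w)
  have "E (fst d) (fst a)" using ad by (rule adj_sym)
  then show ?case
    using ad Cons.IH adj_imp_neq_inv[OF ad] adj_irrefl
    by (auto intro: commute_equiv_Cons commute_equiv_swap)
qed

lemma first_noncomm_mult_letter:
  "E x (fst a) \<Longrightarrow> first_noncomm E x (mult_letter E a w) = first_noncomm E x w"
  by (induction w) (auto simp: adj_sym)

lemma reduced_mult_letter: "reduced E w \<Longrightarrow> reduced E (mult_letter E a w)"
proof (induction w)
  case (Cons c w)
  show ?case
  proof (cases "E (fst a) (fst c)")
    case True
    have "first_noncomm E (fst c) (mult_letter E a w) = first_noncomm E (fst c) w"
      using adj_sym[OF True] by (rule first_noncomm_mult_letter)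
    moreover have "c \<noteq> letter_inv a" using adj_imp_neq_inv[OF True] by blast
    ultimately show ?thesis using True Cons by simp
  next
    case False
    then show ?thesis using Cons.prems by auto
  qed
qed simp

lemma reduced_reduce: "reduced E (reduce E w)"
  by (induction w) (auto intro: reduced_mult_letter)

lemma mult_letter_noncancel:
  "first_noncomm E (fst a) w \<noteq> Some (letter_inv a) \<Longrightarrow> commute_equiv E (mult_letter E a w) (a # w)"
proof (induction w)
  case (Cons d w)
  show ?case
  proof (cases "E (fst a) (fst d)")
    case True
    have "commute_equiv E (mult_letter E a (d # w)) (d # a # w)"
      using Cons True adj_imp_neq_inv[OF True] by (simp add: commute_equiv_Cons)
    also have "commute_equiv E \<dots> (a # d # w)"
      using True adj_sym by (simp add: commute_equiv_swap)
    finally show ?thesis .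
  next
    case False
    then show ?thesis using Cons.prems by auto
  qed
qed simp

lemma mult_letter_cancel:
  "reduced E w \<Longrightarrow> commute_equiv E (mult_letter E a (mult_letter E (letter_inv a) w)) w"
proof (induction w)
  case (Cons c w)
  show ?case
  proof (cases "c = a")
    case True
    then show ?thesis using Cons.prems mult_letter_noncancel by simp
  next
    case False
    then show ?thesis using Cons adj_imp_neq_inv[of a c]
      by (auto simp: commute_equiv_Cons)
  qed
qed simp

lemma commute_equiv_reduce_step:
  "raag_step E w w' \<Longrightarrow> commute_equiv E (reduce E w) (reduce E w')"
proof (induction rule: raag_step.induct)
  case (cancel u x b w)
  have "commute_equiv E (mult_letter E (x, b) (mult_letter E (letter_inv (x, b)) (reduce E w))) (reduce E w)"
    using mult_letter_cancel reduced_reduce by blast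
  then show ?case unfolding reduce_append by (simp add: foldr_mult_letter_commute_equiv)
next
  case (comm x y u b c w)
  then have "commute_equiv E (mult_letter E (x, b) (mult_letter E (y, c) (reduce E w)))
      (mult_letter E (y, c) (mult_letter E (x, b) (reduce E w)))"
    by (simp add: mult_letter_comm)
  then show ?case unfolding reduce_append by (simp add: foldr_mult_letter_commute_equiv)
qed

lemma commute_equiv_reduce: "raag_eq E w w' \<Longrightarrow> commute_equiv E (reduce E w) (reduce E w')"
  unfolding raag_eq_equivclp
  by (induction rule: equivclp_induct)
    (auto intro: equivclp_trans equivclp_sym dest: commute_equiv_reduce_step)

lemma commute_equiv_reduce_reduced: "reduced E w \<Longrightarrow> commute_equiv E (reduce E w) w"
proof (induction w)
  case (Cons c w)
  have "reduced E w" and c: "first_noncomm E (fst c) w \<noteq> Some (letter_inv c)"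
    using Cons.prems by simp_all
  then have "commute_equiv E (mult_letter E c (reduce E w)) (mult_letter E c w)"
    using Cons.IH mult_letter_commute_equiv by blast
  also have "commute_equiv E \<dots> (c # w)"
    using c by (rule mult_letter_noncancel)
  finally show ?case by (simp only: reduce_Cons)
qed simp

lemma length_reduce_cong: "raag_eq E w w' \<Longrightarrow> length (reduce E w') = length (reduce E w)"
  by (rule commute_equiv_length[OF commute_equiv_reduce])

subsection \<open>Word length\<close>

lemma raag_len_eq_length_reduce:
  assumes "w \<in> lists (gens V)"
  shows "raag_len V E w = length (reduce E w)"
  unfolding raag_len_def
proof (rule Least_equality)
  show "\<exists>w'. w' \<in> lists (V \<times> UNIV) \<and> raag_eq E w w' \<and> length w' = length (reduce E w)"
  proof (intro exI conjI)
    show "reduce E w \<in> lists (V \<times> UNIV)"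
      using assms reduce_in_lists unfolding gens_def by blast
    show "raag_eq E w (reduce E w)"
      by (rule raag_eq_sym[OF raag_eq_reduce])
  qed (rule refl)
next
  fix n
  assume "\<exists>w'. w' \<in> lists (V \<times> UNIV) \<and> raag_eq E w w' \<and> length w' = n"
  then obtain w' where "raag_eq E w w'" "length w' = n" by blast
  then show "length (reduce E w) \<le> n"
    using length_reduce_cong[of w w'] length_reduce[of E w'] by simp
qed

lemma raag_len_le:
  assumes "w \<in> lists (gens V)" and "raag_eq E w w'"
  shows "raag_len V E w \<le> length w'"
  using raag_len_eq_length_reduce[OF assms(1)] length_reduce_cong[OF assms(2)] length_reduce[of E w']
  by simp

lemma raag_len_le_length: "w \<in> lists (gens V) \<Longrightarrow> raag_len V E w \<le> length w"
  by (simp add: raag_len_le)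

lemma raag_len_cong:
  "raag_eq E w w' \<Longrightarrow> w \<in> lists (gens V) \<Longrightarrow> w' \<in> lists (gens V) \<Longrightarrow> raag_len V E w = raag_len V E w'"
  by (simp add: raag_len_eq_length_reduce length_reduce_cong)

lemma raag_len_reduced: "reduced E w \<Longrightarrow> w \<in> lists (gens V) \<Longrightarrow> raag_len V E w = length w"
  by (simp add: raag_len_eq_length_reduce commute_equiv_length[OF commute_equiv_reduce_reduced])

lemma raag_len_append_le:
  assumes "u \<in> lists (gens V)" and "w \<in> lists (gens V)"
  shows "raag_len V E (u @ w) \<le> raag_len V E u + raag_len V E w"
proof -
  have "u @ w \<in> lists (gens V)" using assms by simp
  moreover have "raag_eq E (u @ w) (reduce E u @ reduce E w)"
    by (intro raag_eq_append raag_eq_sym[OF raag_eq_reduce])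
  ultimately have "raag_len V E (u @ w) \<le> length (reduce E u @ reduce E w)"
    by (rule raag_len_le)
  then show ?thesis
    using assms by (simp add: raag_len_eq_length_reduce)
qed

end

subsection \<open>Conjugation by a generator\<close>

definition conj_len :: "'v set \<Rightarrow> ('v \<Rightarrow> 'v \<Rightarrow> bool) \<Rightarrow> 'v letter \<Rightarrow> 'v letter list \<Rightarrow> nat" where
  "conj_len V E a g = raag_len V E ([letter_inv a] @ g @ [a])"

lemma raag_central_of_gens:
  assumes "\<forall>a\<in>gens V. raag_eq E (g @ [a]) ([a] @ g)"
  shows "raag_central V E g"
  unfolding raag_central_def
proof
  fix u assume "u \<in> lists (gens V)"
  then show "raag_eq E (g @ u) (u @ g)"
  proof (induction u)
    case (Cons a u)
    have "raag_eq E (g @ [a]) ([a] @ g)" using assms Cons.hyps by blast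
    then have "raag_eq E ((g @ [a]) @ u) (([a] @ g) @ u)"
      using raag_eq_refl by (rule raag_eq_append)
    also have "raag_eq E \<dots> (a # u @ g)" using Cons.IH by (simp add: raag_eq_Cons)
    finally show ?case by simp
  qed simp
qed

context raag_graph
begin

lemma conj_len_ge:
  assumes g: "g \<in> lists (gens V)" and a: "a \<in> gens V"
  shows "raag_len V E g \<le> conj_len V E a g + 2"
proof -
  let ?W = "[letter_inv a] @ g @ [a]"
  have ai: "letter_inv a \<in> gens V" using a by (rule letter_inv_in_gens)
  have W: "?W \<in> lists (gens V)" using g a ai by simp
  have "raag_eq E (a # letter_inv a # g @ [a, letter_inv a]) (g @ [a, letter_inv a])"
    by (rule raag_eq_cancel_Cons)
  also have "raag_eq E \<dots> g" by (rule raag_eq_cancel_snoc)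
  finally have "raag_len V E g = raag_len V E ([a] @ ?W @ [letter_inv a])"
    using g a W ai by (intro raag_len_cong[OF raag_eq_sym]) auto
  also have "\<dots> \<le> raag_len V E [a] + (raag_len V E ?W + raag_len V E [letter_inv a])"
    using a W ai raag_len_append_le[of "[a]" V "?W @ [letter_inv a]"]
      raag_len_append_le[of ?W V "[letter_inv a]"] by simp
  also have "\<dots> \<le> conj_len V E a g + 2"
    using a ai raag_len_le_length[of "[a]" V] raag_len_le_length[of "[letter_inv a]" V]
    by (simp add: conj_len_def)
  finally show ?thesis .
qed

lemma conj_len_ge_of_first:
  assumes g: "g \<in> lists (gens V)" and a: "a \<in> gens V"
    and first: "first_noncomm E (fst a) (reduce E g) \<noteq> Some a"
  shows "raag_len V E g \<le> conj_len V E a g"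
proof -
  let ?w = "reduce E g" and ?W = "[letter_inv a] @ g @ [a]"
  have ai: "letter_inv a \<in> gens V" using a by (rule letter_inv_in_gens)
  have w: "?w \<in> lists (gens V)" using g by (rule reduce_in_lists)
  have "reduced E (letter_inv a # ?w)" using first reduced_reduce by simp
  then have "Suc (raag_len V E g) = raag_len V E (letter_inv a # ?w)"
    using g w ai by (simp add: raag_len_reduced raag_len_eq_length_reduce)
  also have "\<dots> = raag_len V E (?W @ [letter_inv a])"
  proof (rule raag_len_cong)
    have "raag_eq E (letter_inv a # ?w) (letter_inv a # g)"
      by (rule raag_eq_Cons[OF raag_eq_reduce])
    also have "raag_eq E \<dots> (letter_inv a # g @ [a, letter_inv a])"
      by (rule raag_eq_Cons[OF raag_eq_sym[OF raag_eq_cancel_snoc]])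
    finally show "raag_eq E (letter_inv a # ?w) (?W @ [letter_inv a])" by simp
  qed (use g w a ai in simp_all)
  also have "\<dots> \<le> conj_len V E a g + 1"
    using raag_len_append_le[of ?W V "[letter_inv a]"] raag_len_le_length[of "[letter_inv a]" V] g a ai
    by (simp add: conj_len_def)
  finally show ?thesis by simp
qed

lemma conj_len_ge_of_last:
  assumes g: "g \<in> lists (gens V)" and a: "a \<in> gens V"
    and last: "first_noncomm E (fst a) (rev (reduce E g)) \<noteq> Some (letter_inv a)"
  shows "raag_len V E g \<le> conj_len V E a g"
proof -
  let ?w = "reduce E g" and ?W = "[letter_inv a] @ g @ [a]"
  have ai: "letter_inv a \<in> gens V" using a by (rule letter_inv_in_gens)
  have w: "?w \<in> lists (gens V)" using g by (rule reduce_in_lists)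
  have "reduced E (?w @ [a])" using last reduced_reduce by (intro reduced_snoc)
  then have "Suc (raag_len V E g) = raag_len V E (?w @ [a])"
    using g w a by (simp add: raag_len_reduced raag_len_eq_length_reduce)
  also have "\<dots> = raag_len V E ([a] @ ?W)"
  proof (rule raag_len_cong)
    have "raag_eq E (?w @ [a]) (g @ [a])"
      using raag_eq_append[OF raag_eq_reduce raag_eq_refl] .
    also have "raag_eq E \<dots> (a # letter_inv a # g @ [a])"
      by (rule raag_eq_sym[OF raag_eq_cancel_Cons])
    finally show "raag_eq E (?w @ [a]) ([a] @ ?W)" by simp
  qed (use g w a ai in simp_all)
  also have "\<dots> \<le> conj_len V E a g + 1"
    using raag_len_append_le[of "[a]" V ?W] raag_len_le_length[of "[a]" V] g a ai
    by (simp add: conj_len_def)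
  finally show ?thesis by simp
qed

lemma conj_len_eq_of_noncancel:
  assumes g: "g \<in> lists (gens V)" and a: "a \<in> gens V"
    and first: "first_noncomm E (fst a) (reduce E g) \<notin> {None, Some a}"
    and last: "first_noncomm E (fst a) (rev (reduce E g)) \<noteq> Some (letter_inv a)"
  shows "conj_len V E a g = raag_len V E g + 2"
proof -
  let ?w = "reduce E g"
  have ai: "letter_inv a \<in> gens V" using a by (rule letter_inv_in_gens)
  have w: "?w \<in> lists (gens V)" using g by (rule reduce_in_lists)
  have "reduced E (?w @ [a])" using last reduced_reduce by (intro reduced_snoc)
  moreover have "first_noncomm E (fst a) (?w @ [a]) = first_noncomm E (fst a) ?w"
    using first by (auto simp: first_noncomm_append split: option.split)
  ultimately have red: "reduced E (letter_inv a # ?w @ [a])" using first by simp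
  have "raag_eq E ([letter_inv a] @ g @ [a]) (letter_inv a # ?w @ [a])"
    using raag_eq_Cons[OF raag_eq_append[OF raag_eq_sym[OF raag_eq_reduce] raag_eq_refl]] by simp
  then have "conj_len V E a g = raag_len V E (letter_inv a # ?w @ [a])"
    unfolding conj_len_def using g w a ai by (intro raag_len_cong) auto
  also have "\<dots> = raag_len V E g + 2"
    using red g w a ai by (simp add: raag_len_reduced raag_len_eq_length_reduce)
  finally show ?thesis .
qed

lemma conj_len_pair_ge:
  assumes g: "g \<in> lists (gens V)" and a: "a \<in> gens V"
  shows "2 * raag_len V E g \<le> conj_len V E a g + conj_len V E (letter_inv a) g"
proof -
  have pair_ge: "2 * raag_len V E g \<le> conj_len V E b g + conj_len V E (letter_inv b) g"
    if b: "b \<in> gens V" and first: "first_noncomm E (fst b) (reduce E g) \<noteq> Some (letter_inv b)" for b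
  proof -
    have bi: "letter_inv b \<in> gens V" using b by (rule letter_inv_in_gens)
    have first_inv: "raag_len V E g \<le> conj_len V E (letter_inv b) g"
      using conj_len_ge_of_first[OF g bi] first by simp
    show ?thesis
    proof (cases "first_noncomm E (fst b) (rev (reduce E g)) = Some (letter_inv b)")
      case True
      then have "first_noncomm E (fst b) (reduce E g) \<noteq> None"
        by (metis first_noncomm_rev_eq_None option.distinct(1))
      then have "conj_len V E (letter_inv b) g = raag_len V E g + 2"
        using conj_len_eq_of_noncancel[OF g bi] first True by simp
      then show ?thesis using conj_len_ge[OF g b] by simp
    next
      case False
      then show ?thesis using conj_len_ge_of_last[OF g b] first_inv by simp
    qed
  qed
  show ?thesis
  proof (cases "first_noncomm E (fst a) (reduce E g) = Some (letter_inv a)")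
    case True
    then show ?thesis
      using pair_ge[OF letter_inv_in_gens[OF a]] by (simp add: add.commute)
  qed (use pair_ge[OF a] in simp)
qed

lemma conj_len_pair_gt:
  assumes g: "g \<in> lists (gens V)" and a: "a \<in> gens V"
    and first: "first_noncomm E (fst a) (reduce E g) = Some e" and e: "fst e \<noteq> fst a"
  shows "2 * raag_len V E g < conj_len V E a g + conj_len V E (letter_inv a) g"
proof -
  have ai: "letter_inv a \<in> gens V" using a by (rule letter_inv_in_gens)
  have "e \<noteq> a" "e \<noteq> letter_inv a" using e by auto
  then have first_ge: "raag_len V E g \<le> conj_len V E a g" "raag_len V E g \<le> conj_len V E (letter_inv a) g"
    using conj_len_ge_of_first[OF g a] conj_len_ge_of_first[OF g ai] first by simp_all
  show ?thesis
  proof (cases "first_noncomm E (fst a) (rev (reduce E g)) = Some (letter_inv a)")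
    case True
    then have "conj_len V E (letter_inv a) g = raag_len V E g + 2"
      using conj_len_eq_of_noncancel[OF g ai] first \<open>e \<noteq> letter_inv a\<close> by simp
    then show ?thesis using first_ge by simp
  next
    case False
    then have "conj_len V E a g = raag_len V E g + 2"
      using conj_len_eq_of_noncancel[OF g a] first \<open>e \<noteq> a\<close> by simp
    then show ?thesis using first_ge by simp
  qed
qed

lemma conj_len_central:
  assumes c: "raag_central V E g" and g: "g \<in> lists (gens V)" and a: "a \<in> gens V"
  shows "conj_len V E a g = raag_len V E g"
proof -
  have "[a] \<in> lists (gens V)" using a by simp
  then have "raag_eq E (g @ [a]) ([a] @ g)" using c unfolding raag_central_def by blast
  then have "raag_eq E ([letter_inv a] @ g @ [a]) (letter_inv a # a # g)"
    using raag_eq_Cons by fastforce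
  also have "raag_eq E \<dots> g" using raag_eq_cancel_Cons[of E "letter_inv a"] by simp
  finally show ?thesis
    unfolding conj_len_def using g a letter_inv_in_gens[OF a] by (intro raag_len_cong) auto
qed

lemma raag_eq_snoc_commute:
  "\<forall>e\<in>set w. fst e = fst a \<or> E (fst a) (fst e) \<Longrightarrow> raag_eq E (w @ [a]) (a # w)"
proof (induction w)
  case (Cons e w)
  have "raag_eq E (e # w @ [a]) (e # a # w)" using Cons by (simp add: raag_eq_Cons)
  also have "raag_eq E \<dots> (a # e # w)"
  proof (cases "fst e = fst a")
    case True
    then consider "e = a" | "e = letter_inv a" by (auto simp: fst_eq_iff_letter_or_inv)
    then show ?thesis
    proof cases
      case 2
      have "raag_eq E (letter_inv a # a # w) w" using raag_eq_cancel_Cons[of E "letter_inv a"] by simp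
      also have "raag_eq E \<dots> (a # letter_inv a # w)" by (rule raag_eq_sym[OF raag_eq_cancel_Cons])
      finally show ?thesis using 2 by simp
    qed simp
  next
    case False
    then show ?thesis using Cons.prems adj_sym by (simp add: raag_eq_swap)
  qed
  finally show ?case by simp
qed simp

lemma first_noncomm_self_not_both:
  assumes "\<not> E x z" and "x \<noteq> z"
  shows "first_noncomm E x w = Some f \<Longrightarrow> first_noncomm E z w = Some f' \<Longrightarrow> fst f \<noteq> x \<or> fst f' \<noteq> z"
proof (induction w)
  case (Cons h w)
  then show ?case using assms adj_sym by (auto split: if_splits)
qed simp

lemma noncentral_first_noncomm:
  assumes g: "g \<in> lists (gens V)" and nc: "\<not> raag_central V E g"
  obtains a e where "a \<in> gens V" "first_noncomm E (fst a) (reduce E g) = Some e" "fst e \<noteq> fst a"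
proof -
  let ?w = "reduce E g"
  obtain a where a: "a \<in> gens V" "\<not> raag_eq E (g @ [a]) ([a] @ g)"
    using nc raag_central_of_gens by blast
  have "\<exists>e\<in>set ?w. fst e \<noteq> fst a \<and> \<not> E (fst a) (fst e)"
  proof (rule ccontr)
    assume "\<not> ?thesis"
    then have "raag_eq E (?w @ [a]) (a # ?w)" by (intro raag_eq_snoc_commute) blast
    then have "raag_eq E (g @ [a]) (a # g)"
      using raag_eq_append[OF raag_eq_reduce raag_eq_refl, of E g "[a]"] raag_eq_Cons[OF raag_eq_reduce]
      by (meson raag_eq_sym raag_eq_trans)
    then show False using a(2) by simp
  qed
  then obtain e where e: "e \<in> set ?w" "fst e \<noteq> fst a" "\<not> E (fst a) (fst e)" by blast
  obtain f where f: "first_noncomm E (fst a) ?w = Some f"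
    using first_noncomm_neq_None[where E = E and x = "fst a", OF e(1) e(3)] by blast
  obtain f' where f': "first_noncomm E (fst e) ?w = Some f'"
    using first_noncomm_neq_None[where E = E and x = "fst e", OF e(1) adj_irrefl] by blast
  have "e \<in> gens V" using e(1) reduce_in_lists[OF g] by auto
  then have "(fst e, True) \<in> gens V" by (auto simp: gens_def)
  moreover from first_noncomm_self_not_both[OF e(3) e(2)[symmetric] f f']
  have "fst f \<noteq> fst a \<or> fst f' \<noteq> fst e" by blast
  ultimately show ?thesis using that a(1) f f' by (metis fst_conv)
qed

end

subsection \<open>The average length of conjugates\<close>

lemma sum_gens: "(\<Sum>a\<in>gens V. h a) = (\<Sum>x\<in>V. h (x, True) + h (x, False))"
proof -
  have "(\<Sum>a\<in>gens V. h a) = (\<Sum>x\<in>V. \<Sum>b\<in>UNIV. h (x, b))"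
    unfolding gens_def sum.cartesian_product by (simp add: split_beta)
  then show ?thesis by (simp add: UNIV_bool add.commute)
qed

lemma card_gens: "card (gens V) = 2 * card V"
  by (simp add: gens_def card_cartesian_product)

lemma card_gens_pos: "finite V \<Longrightarrow> V \<noteq> {} \<Longrightarrow> 0 < card (gens V)"
  by (simp add: card_gens card_gt_0_iff)

lemma raag_Av_eq: "raag_Av V E g = real (\<Sum>a\<in>gens V. conj_len V E a g) / real (card (gens V))"
  by (simp add: raag_Av_def conj_len_def)

context raag_graph
begin

lemma sum_conj_len_gt:
  assumes V: "finite V" and g: "g \<in> lists (gens V)" and nc: "\<not> raag_central V E g"
  shows "raag_len V E g * card (gens V) < (\<Sum>a\<in>gens V. conj_len V E a g)"
proof -
  obtain a e where a: "a \<in> gens V" and e: "first_noncomm E (fst a) (reduce E g) = Some e" "fst e \<noteq> fst a"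
    using noncentral_first_noncomm[OF g nc] .
  obtain x b where x: "x \<in> V" and a_eq: "a = (x, b)" using a by (auto simp: gens_def)
  have pair_ge: "\<forall>x\<in>V. 2 * raag_len V E g \<le> conj_len V E (x, True) g + conj_len V E (x, False) g"
    using conj_len_pair_ge[OF g, of "(x, True)" for x] by (simp add: gens_def)
  have "2 * raag_len V E g < conj_len V E (x, b) g + conj_len V E (x, \<not> b) g"
    using conj_len_pair_gt[OF g a e] a_eq by simp
  then have pair_gt: "\<exists>x\<in>V. 2 * raag_len V E g < conj_len V E (x, True) g + conj_len V E (x, False) g"
    using x by (cases b) (auto simp: add.commute)
  have "raag_len V E g * card (gens V) = (\<Sum>x\<in>V. 2 * raag_len V E g)"
    by (simp add: card_gens)
  also have "\<dots> < (\<Sum>x\<in>V. conj_len V E (x, True) g + conj_len V E (x, False) g)"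
    using V pair_ge pair_gt by (rule sum_strict_mono_ex1)
  also have "\<dots> = (\<Sum>a\<in>gens V. conj_len V E a g)"
    by (rule sum_gens[symmetric])
  finally show ?thesis .
qed

lemma raag_len_less_Av:
  assumes V: "finite V" "V \<noteq> {}" and g: "g \<in> lists (gens V)" and nc: "\<not> raag_central V E g"
  shows "real (raag_len V E g) < raag_Av V E g"
proof -
  have "real (raag_len V E g) * real (card (gens V)) < real (\<Sum>a\<in>gens V. conj_len V E a g)"
    using sum_conj_len_gt[OF V(1) g nc] by (metis of_nat_less_iff of_nat_mult)
  moreover have "card (gens V) > 0" using V by (rule card_gens_pos)
  ultimately show ?thesis by (simp only: raag_Av_eq pos_less_divide_eq of_nat_0_less_iff)
qed

lemma raag_Av_central:
  assumes V: "finite V" "V \<noteq> {}" and g: "g \<in> lists (gens V)" and c: "raag_central V E g"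
  shows "raag_Av V E g = real (raag_len V E g)"
proof -
  have "card (gens V) > 0" using V by (rule card_gens_pos)
  then show ?thesis using conj_len_central[OF c g] by (simp add: raag_Av_eq)
qed

end

theorem mainTheorem14:
  fixes V :: "'v set" and E :: "'v \<Rightarrow> 'v \<Rightarrow> bool" and g :: "'v letter list"
  assumes "finite V"
    and "\<And>x y. E x y \<Longrightarrow> x \<in> V \<and> y \<in> V"
    and "\<And>x y. E x y \<Longrightarrow> E y x"
    and "\<And>x. \<not> E x x"
    and "g \<in> lists (gens V)"
    and "\<not> raag_eq E g []"
  shows "(raag_curv V E g = 0 \<longleftrightarrow> raag_central V E g)
       \<and> (\<not> raag_central V E g \<longrightarrow> raag_curv V E g < 0)"
proof -
  interpret raag_graph E using assms(3,4) by unfold_locales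
  have len_pos: "raag_len V E g > 0"
    using assms(5,6) raag_eq_sym[OF raag_eq_reduce[of E g]] by (auto simp: raag_len_eq_length_reduce)
  have "V \<noteq> {}" using assms(5,6) by (cases g) (auto simp: gens_def)
  have curv: "raag_curv V E g = (real (raag_len V E g) - raag_Av V E g) / real (raag_len V E g)"
    by (simp add: raag_curv_def)
  show ?thesis
  proof (cases "raag_central V E g")
    case True
    then show ?thesis using raag_Av_central[OF assms(1) \<open>V \<noteq> {}\<close> assms(5)] curv by simp
  next
    case False
    then have "raag_curv V E g < 0"
      using raag_len_less_Av[OF assms(1) \<open>V \<noteq> {}\<close> assms(5)] len_pos curv by (simp add: divide_neg_pos)
    then show ?thesis using False by simp
  qed
qed

end
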